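(* In the setting described in the context, suppose $\mathrm{ev}$ is multiplicative and the functor $\mathcal{U}$ is strong symmetric monoidal (property (M)). Then: (1) for all objects $W,W'$ the composition map $\circ\colon\operatorname{Hom}_{\mathcal{P}^1}(\emptyset,W')\otimes\operatorname{Hom}_{\mathcal{P}^1}(W,\emptyset)\to\operatorname{Hom}_{\mathcal{P}^1}(W,W')$ is surjective (property (M')), $I_1(W,W')=I_2(W,W')$, and hence the quotient functor $\mathcal{P}^1\to\mathcal{P}^2$ is an isomorphism of $\Bbbk$-linear categories; (2) the ideal $I:=I_1=I_2$ is monoidal, i.e. $\Sigma\sqcup\Theta\in I(V\sqcup W,V'\sqcup W')$ whenever $\Sigma\in I(V,V')$ and $\Theta\in\operatorname{Hom}_{\mathcal{P}}(W,W')$, so the symmetric monoidal structure of $\mathcal{P}$ descends to $\mathcal{P}^1$, and the functor $\operatorname{Hom}_{\mathcal{P}^1}(\emptyset,-)\colon\mathcal{P}^1\to\Bbbk\text{-mod}$ is strong symmetric monoidal.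
   Context: Setting. Let $\Bbbk$ be a commutative ring. Let $\mathcal{P}$ be a small $\Bbbk$-linear (strict) symmetric monoidal category with monoidal product $\sqcup$ and unit object $\emptyset$, in which every object $W$ has a chosen dual $W^r$, giving the standard identifications $\operatorname{Hom}(W_1,W_2)\cong\operatorname{Hom}(\emptyset,W_2\sqcup W_1^r)\cong\operatorname{Hom}(W_1\sqcup W_2^r,\emptyset)\cong\operatorname{Hom}(W_2^r,W_1^r)$. (In the paper $\mathcal{P}$ is the category of closed $\mathcal{C}$-labeled webs and prefoams.) Let $\mathrm{tr}_W$ be the categorical trace and $\mathrm{ev}\colon\operatorname{End}_{\mathcal{P}}(\emptyset)\to\Bbbk$ a $\Bbbk$-linear map; it is multiplicative if $\mathrm{ev}(\mathrm{id}_\emptyset)=1$ and $\mathrm{ev}(\Sigma_1\sqcup\Sigma_2)=\mathrm{ev}(\Sigma_1)\mathrm{ev}(\Sigma_2)$. Define $I_1(W,W')\subseteq\operatorname{Hom}(W,W')$ as the set of $\Sigma$ with $\mathrm{ev}(\mathrm{tr}_W(\Sigma'\circ\Sigma))=0$ for all $\Sigma'\in\operatorname{Hom}(W',W)$, and $I_2(W,W')$ as the set of $\Sigma$ with $\mathrm{ev}(\Sigma''\circ\Sigma\circ\Sigma')=0$ for all $\Sigma'\in\operatorname{Hom}(\emptyset,W)$, $\Sigma''\in\operatorname{Hom}(W',\emptyset)$; these are ideals with $I_1\subseteq I_2$. Let $\pi\colon\mathcal{P}\to\mathcal{P}^1:=\mathcal{P}/I_1$, $\mathcal{P}^2:=\mathcal{P}/I_2$,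 and $\mathcal{U}:=\operatorname{Hom}_{\mathcal{P}^1}(\emptyset,-)\circ\pi\colon\mathcal{P}\to\Bbbk\text{-mod}$, which (for multiplicative $\mathrm{ev}$) is lax symmetric monoidal via the maps $\mathcal{U}(W)\otimes\mathcal{U}(V)\to\mathcal{U}(W\sqcup V)$ induced by $\sqcup$; strong means these maps and the unit map $\Bbbk\to\mathcal{U}(\emptyset)$ are isomorphisms. *)

theory Defs
  imports Main
begin

text \<open>A small k-linear strict symmetric monoidal category with chosen (right) duals,
  presented with a single type of morphisms 'm and hom-sets Hom A B.
  Composition: c_comp g f is g after f.\<close>

record ('o, 'm, 'k) lsmcat =
  c_hom   :: "'o \<Rightarrow> 'o \<Rightarrow> 'm set"
  c_comp  :: "'m \<Rightarrow> 'm \<Rightarrow> 'm"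
  c_id    :: "'o \<Rightarrow> 'm"
  c_add   :: "'m \<Rightarrow> 'm \<Rightarrow> 'm"
  c_zero  :: "'o \<Rightarrow> 'o \<Rightarrow> 'm"
  c_smul  :: "'k \<Rightarrow> 'm \<Rightarrow> 'm"
  c_otens :: "'o \<Rightarrow> 'o \<Rightarrow> 'o"
  c_unit  :: "'o"
  c_mtens :: "'m \<Rightarrow> 'm \<Rightarrow> 'm"
  c_braid :: "'o \<Rightarrow> 'o \<Rightarrow> 'm"
  c_dual  :: "'o \<Rightarrow> 'o"
  c_coev  :: "'o \<Rightarrow> 'm"
  c_evl   :: "'o \<Rightarrow> 'm"

locale lin_sym_mon_cat_duals =
  fixes C :: "('o, 'm, 'k::comm_ring_1) lsmcat"
  assumes
    comp_closed: "\<And>A B D f g. f \<in> c_hom C A B \<Longrightarrow> g \<in> c_hom C B D \<Longrightarrow> c_comp C g f \<in> c_hom C A D"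
    and id_closed: "\<And>A. c_id C A \<in> c_hom C A A"
    and id_left: "\<And>A B f. f \<in> c_hom C A B \<Longrightarrow> c_comp C (c_id C B) f = f"
    and id_right: "\<And>A B f. f \<in> c_hom C A B \<Longrightarrow> c_comp C f (c_id C A) = f"
    and comp_assoc: "\<And>A B D E f g h. f \<in> c_hom C A B \<Longrightarrow> g \<in> c_hom C B D \<Longrightarrow> h \<in> c_hom C D E \<Longrightarrow>
         c_comp C h (c_comp C g f) = c_comp C (c_comp C h g) f"
    and zero_closed: "\<And>A B. c_zero C A B \<in> c_hom C A B"
    and add_closed: "\<And>A B f g. f \<in> c_hom C A B \<Longrightarrow> g \<in> c_hom C A B \<Longrightarrow> c_add C f g \<in> c_hom C A B"
    and smul_closed: "\<And>A B a f. f \<in> c_hom C A B \<Longrightarrow> c_smul C a f \<in> c_hom C A B"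
    and add_assoc: "\<And>A B f g h. f \<in> c_hom C A B \<Longrightarrow> g \<in> c_hom C A B \<Longrightarrow> h \<in> c_hom C A B \<Longrightarrow>
         c_add C (c_add C f g) h = c_add C f (c_add C g h)"
    and add_comm: "\<And>A B f g. f \<in> c_hom C A B \<Longrightarrow> g \<in> c_hom C A B \<Longrightarrow> c_add C f g = c_add C g f"
    and add_zero: "\<And>A B f. f \<in> c_hom C A B \<Longrightarrow> c_add C f (c_zero C A B) = f"
    and add_neg: "\<And>A B f. f \<in> c_hom C A B \<Longrightarrow> c_add C f (c_smul C (-1) f) = c_zero C A B"
    and smul_one: "\<And>A B f. f \<in> c_hom C A B \<Longrightarrow> c_smul C 1 f = f"
    and smul_smul: "\<And>A B a b f. f \<in> c_hom C A B \<Longrightarrow> c_smul C (a * b) f = c_smul C a (c_smul C b f)"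
    and smul_add_left: "\<And>A B a b f. f \<in> c_hom C A B \<Longrightarrow> c_smul C (a + b) f = c_add C (c_smul C a f) (c_smul C b f)"
    and smul_add_right: "\<And>A B a f g. f \<in> c_hom C A B \<Longrightarrow> g \<in> c_hom C A B \<Longrightarrow>
         c_smul C a (c_add C f g) = c_add C (c_smul C a f) (c_smul C a g)"
    and comp_add_left: "\<And>A B D f g g'. f \<in> c_hom C A B \<Longrightarrow> g \<in> c_hom C B D \<Longrightarrow> g' \<in> c_hom C B D \<Longrightarrow>
         c_comp C (c_add C g g') f = c_add C (c_comp C g f) (c_comp C g' f)"
    and comp_add_right: "\<And>A B D f f' g. f \<in> c_hom C A B \<Longrightarrow> f' \<in> c_hom C A B \<Longrightarrow> g \<in> c_hom C B D \<Longrightarrow>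
         c_comp C g (c_add C f f') = c_add C (c_comp C g f) (c_comp C g f')"
    and comp_smul_left: "\<And>A B D a f g. f \<in> c_hom C A B \<Longrightarrow> g \<in> c_hom C B D \<Longrightarrow>
         c_comp C (c_smul C a g) f = c_smul C a (c_comp C g f)"
    and comp_smul_right: "\<And>A B D a f g. f \<in> c_hom C A B \<Longrightarrow> g \<in> c_hom C B D \<Longrightarrow>
         c_comp C g (c_smul C a f) = c_smul C a (c_comp C g f)"
    and otens_assoc: "\<And>A B D. c_otens C (c_otens C A B) D = c_otens C A (c_otens C B D)"
    and otens_unit_left: "\<And>A. c_otens C (c_unit C) A = A"
    and otens_unit_right: "\<And>A. c_otens C A (c_unit C) = A"
    and mtens_closed: "\<And>A B A' B' f g. f \<in> c_hom C A B \<Longrightarrow> g \<in> c_hom C A' B' \<Longrightarrow>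
         c_mtens C f g \<in> c_hom C (c_otens C A A') (c_otens C B B')"
    and mtens_assoc: "\<And>A B A' B' A'' B'' f g h. f \<in> c_hom C A B \<Longrightarrow> g \<in> c_hom C A' B' \<Longrightarrow> h \<in> c_hom C A'' B'' \<Longrightarrow>
         c_mtens C (c_mtens C f g) h = c_mtens C f (c_mtens C g h)"
    and mtens_unit_left: "\<And>A B f. f \<in> c_hom C A B \<Longrightarrow> c_mtens C (c_id C (c_unit C)) f = f"
    and mtens_unit_right: "\<And>A B f. f \<in> c_hom C A B \<Longrightarrow> c_mtens C f (c_id C (c_unit C)) = f"
    and mtens_id: "\<And>A B. c_mtens C (c_id C A) (c_id C B) = c_id C (c_otens C A B)"
    and interchange: "\<And>A B D A' B' D' f g f' g'. f \<in> c_hom C A B \<Longrightarrow> g \<in> c_hom C B D \<Longrightarrow>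
         f' \<in> c_hom C A' B' \<Longrightarrow> g' \<in> c_hom C B' D' \<Longrightarrow>
         c_mtens C (c_comp C g f) (c_comp C g' f') = c_comp C (c_mtens C g g') (c_mtens C f f')"
    and mtens_add_left: "\<And>A B A' B' f f' g. f \<in> c_hom C A B \<Longrightarrow> f' \<in> c_hom C A B \<Longrightarrow> g \<in> c_hom C A' B' \<Longrightarrow>
         c_mtens C (c_add C f f') g = c_add C (c_mtens C f g) (c_mtens C f' g)"
    and mtens_add_right: "\<And>A B A' B' f g g'. f \<in> c_hom C A B \<Longrightarrow> g \<in> c_hom C A' B' \<Longrightarrow> g' \<in> c_hom C A' B' \<Longrightarrow>
         c_mtens C f (c_add C g g') = c_add C (c_mtens C f g) (c_mtens C f g')"
    and mtens_smul_left: "\<And>A B A' B' a f g. f \<in> c_hom C A B \<Longrightarrow> g \<in> c_hom C A' B' \<Longrightarrow>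
         c_mtens C (c_smul C a f) g = c_smul C a (c_mtens C f g)"
    and mtens_smul_right: "\<And>A B A' B' a f g. f \<in> c_hom C A B \<Longrightarrow> g \<in> c_hom C A' B' \<Longrightarrow>
         c_mtens C f (c_smul C a g) = c_smul C a (c_mtens C f g)"
    and braid_closed: "\<And>A B. c_braid C A B \<in> c_hom C (c_otens C A B) (c_otens C B A)"
    and braid_natural: "\<And>A B A' B' f g. f \<in> c_hom C A B \<Longrightarrow> g \<in> c_hom C A' B' \<Longrightarrow>
         c_comp C (c_braid C B B') (c_mtens C f g) = c_comp C (c_mtens C g f) (c_braid C A A')"
    and braid_sym: "\<And>A B. c_comp C (c_braid C B A) (c_braid C A B) = c_id C (c_otens C A B)"
    and braid_hexagon1: "\<And>A B D. c_braid C A (c_otens C B D) =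
         c_comp C (c_mtens C (c_id C B) (c_braid C A D)) (c_mtens C (c_braid C A B) (c_id C D))"
    and braid_hexagon2: "\<And>A B D. c_braid C (c_otens C A B) D =
         c_comp C (c_mtens C (c_braid C A D) (c_id C B)) (c_mtens C (c_id C A) (c_braid C B D))"
    and coev_closed: "\<And>A. c_coev C A \<in> c_hom C (c_unit C) (c_otens C A (c_dual C A))"
    and evl_closed: "\<And>A. c_evl C A \<in> c_hom C (c_otens C (c_dual C A) A) (c_unit C)"
    and zigzag1: "\<And>A. c_comp C (c_mtens C (c_id C A) (c_evl C A)) (c_mtens C (c_coev C A) (c_id C A)) = c_id C A"
    and zigzag2: "\<And>A. c_comp C (c_mtens C (c_evl C A) (c_id C (c_dual C A)))
                         (c_mtens C (c_id C (c_dual C A)) (c_coev C A)) = c_id C (c_dual C A)"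

definition ctrace :: "('o, 'm, 'k) lsmcat \<Rightarrow> 'o \<Rightarrow> 'm \<Rightarrow> 'm" where
  "ctrace C W f = c_comp C (c_evl C W) (c_comp C (c_braid C W (c_dual C W))
       (c_comp C (c_mtens C f (c_id C (c_dual C W))) (c_coev C W)))"

definition ev_linear :: "('o, 'm, 'k::comm_ring_1) lsmcat \<Rightarrow> ('m \<Rightarrow> 'k) \<Rightarrow> bool" where
  "ev_linear C ev \<longleftrightarrow>
     (\<forall>a \<in> c_hom C (c_unit C) (c_unit C). \<forall>b \<in> c_hom C (c_unit C) (c_unit C).
        ev (c_add C a b) = ev a + ev b) \<and>
     (\<forall>a \<in> c_hom C (c_unit C) (c_unit C). \<forall>c. ev (c_smul C c a) = c * ev a)"

definition ev_multiplicative :: "('o, 'm, 'k::comm_ring_1) lsmcat \<Rightarrow> ('m \<Rightarrow> 'k) \<Rightarrow> bool" where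
  "ev_multiplicative C ev \<longleftrightarrow>
     ev (c_id C (c_unit C)) = 1 \<and>
     (\<forall>a \<in> c_hom C (c_unit C) (c_unit C). \<forall>b \<in> c_hom C (c_unit C) (c_unit C).
        ev (c_mtens C a b) = ev a * ev b)"

definition I1 :: "('o, 'm, 'k::comm_ring_1) lsmcat \<Rightarrow> ('m \<Rightarrow> 'k) \<Rightarrow> 'o \<Rightarrow> 'o \<Rightarrow> 'm set" where
  "I1 C ev W W' = {S \<in> c_hom C W W'. \<forall>S' \<in> c_hom C W' W. ev (ctrace C W (c_comp C S' S)) = 0}"

definition I2 :: "('o, 'm, 'k::comm_ring_1) lsmcat \<Rightarrow> ('m \<Rightarrow> 'k) \<Rightarrow> 'o \<Rightarrow> 'o \<Rightarrow> 'm set" where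
  "I2 C ev W W' = {S \<in> c_hom C W W'. \<forall>S' \<in> c_hom C (c_unit C) W. \<forall>S'' \<in> c_hom C W' (c_unit C).
       ev (c_comp C S'' (c_comp C S S')) = 0}"

definition mdiff :: "('o, 'm, 'k::comm_ring_1) lsmcat \<Rightarrow> 'm \<Rightarrow> 'm \<Rightarrow> 'm" where
  "mdiff C f g = c_add C f (c_smul C (-1) g)"

definition msum :: "('o, 'm, 'k) lsmcat \<Rightarrow> 'o \<Rightarrow> 'o \<Rightarrow> 'm list \<Rightarrow> 'm" where
  "msum C A B fs = foldr (c_add C) fs (c_zero C A B)"

text \<open>The class of x in U(W) = Hom_{P^1}(empty, W) = Hom(empty,W) / I1(empty,W).\<close>
definition ucls :: "('o, 'm, 'k::comm_ring_1) lsmcat \<Rightarrow> ('m \<Rightarrow> 'k) \<Rightarrow> 'o \<Rightarrow> 'm \<Rightarrow> 'm set" where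
  "ucls C ev W x = {x' \<in> c_hom C (c_unit C) W. mdiff C x' x \<in> I1 C ev (c_unit C) W}"

text \<open>Tensor product U(W) (x)_k U(V): free k-module on pairs of classes (finitely supported
  functions) modulo the submodule spanned by the bilinearity relations.\<close>
inductive_set kspan :: "('p \<Rightarrow> 'k::comm_ring_1) set \<Rightarrow> ('p \<Rightarrow> 'k) set" for G where
  kspan_zero: "(\<lambda>_. 0) \<in> kspan G"
| kspan_gen: "g \<in> G \<Longrightarrow> g \<in> kspan G"
| kspan_add: "f \<in> kspan G \<Longrightarrow> g \<in> kspan G \<Longrightarrow> (\<lambda>p. f p + g p) \<in> kspan G"
| kspan_smul: "f \<in> kspan G \<Longrightarrow> (\<lambda>p. c * f p) \<in> kspan G"

definition fdelta :: "'p \<Rightarrow> ('p \<Rightarrow> 'k::comm_ring_1)" where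
  "fdelta p = (\<lambda>q. if q = p then 1 else 0)"

definition tens_rels :: "('o, 'm, 'k::comm_ring_1) lsmcat \<Rightarrow> ('m \<Rightarrow> 'k) \<Rightarrow> 'o \<Rightarrow> 'o \<Rightarrow>
    (('m set \<times> 'm set) \<Rightarrow> 'k) set" where
  "tens_rels C ev W V =
     {(\<lambda>q. fdelta (ucls C ev W (c_add C x x'), ucls C ev V y) q - fdelta (ucls C ev W x, ucls C ev V y) q
            - fdelta (ucls C ev W x', ucls C ev V y) q) | x x' y.
        x \<in> c_hom C (c_unit C) W \<and> x' \<in> c_hom C (c_unit C) W \<and> y \<in> c_hom C (c_unit C) V}
   \<union> {(\<lambda>q. fdelta (ucls C ev W x, ucls C ev V (c_add C y y')) q - fdelta (ucls C ev W x, ucls C ev V y) q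
            - fdelta (ucls C ev W x, ucls C ev V y') q) | x y y'.
        x \<in> c_hom C (c_unit C) W \<and> y \<in> c_hom C (c_unit C) V \<and> y' \<in> c_hom C (c_unit C) V}
   \<union> {(\<lambda>q. fdelta (ucls C ev W (c_smul C c x), ucls C ev V y) q - c * fdelta (ucls C ev W x, ucls C ev V y) q) | c x y.
        x \<in> c_hom C (c_unit C) W \<and> y \<in> c_hom C (c_unit C) V}
   \<union> {(\<lambda>q. fdelta (ucls C ev W x, ucls C ev V (c_smul C c y)) q - c * fdelta (ucls C ev W x, ucls C ev V y) q) | c x y.
        x \<in> c_hom C (c_unit C) W \<and> y \<in> c_hom C (c_unit C) V}"

definition formal_tens :: "('o, 'm, 'k::comm_ring_1) lsmcat \<Rightarrow> ('m \<Rightarrow> 'k) \<Rightarrow> 'o \<Rightarrow> 'o \<Rightarrow>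
    ('k \<times> 'm \<times> 'm) list \<Rightarrow> (('m set \<times> 'm set) \<Rightarrow> 'k)" where
  "formal_tens C ev W V l =
     (\<lambda>q. sum_list (map (\<lambda>(c, x, y). c * fdelta (ucls C ev W x, ucls C ev V y) q) l))"

text \<open>Property (M): the lax structure maps U(W) (x) U(V) -> U(W V), [x](x)[y] |-> [x y],
  and k -> U(empty), c |-> [c id], are isomorphisms (surjective and injective).\<close>
definition U_strong :: "('o, 'm, 'k::comm_ring_1) lsmcat \<Rightarrow> ('m \<Rightarrow> 'k) \<Rightarrow> bool" where
  "U_strong C ev \<longleftrightarrow>
     (\<forall>W V.
        (\<forall>z \<in> c_hom C (c_unit C) (c_otens C W V). \<exists>l.
           set l \<subseteq> {(c, x, y). x \<in> c_hom C (c_unit C) W \<and> y \<in> c_hom C (c_unit C) V} \<and>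
           mdiff C z (msum C (c_unit C) (c_otens C W V) (map (\<lambda>(c, x, y). c_smul C c (c_mtens C x y)) l))
             \<in> I1 C ev (c_unit C) (c_otens C W V)) \<and>
        (\<forall>l. set l \<subseteq> {(c, x, y). x \<in> c_hom C (c_unit C) W \<and> y \<in> c_hom C (c_unit C) V} \<longrightarrow>
           msum C (c_unit C) (c_otens C W V) (map (\<lambda>(c, x, y). c_smul C c (c_mtens C x y)) l)
             \<in> I1 C ev (c_unit C) (c_otens C W V) \<longrightarrow>
           formal_tens C ev W V l \<in> kspan (tens_rels C ev W V))) \<and>
     (\<forall>z \<in> c_hom C (c_unit C) (c_unit C). \<exists>c.
        mdiff C z (c_smul C c (c_id C (c_unit C))) \<in> I1 C ev (c_unit C) (c_unit C)) \<and>
     (\<forall>c. c_smul C c (c_id C (c_unit C)) \<in> I1 C ev (c_unit C) (c_unit C) \<longrightarrow> c = 0)"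

end

theory Submission
  imports Defs
begin

(* Modulo I\<^sub>1 the coevaluation decomposes as coev\<^sub>W = \<Sum>\<^sub>i c\<^sub>i x\<^sub>i \<otimes> y\<^sub>i, by the surjectivity in (M)
   for W \<otimes> W\<^sup>r. Hence for every endomorphism h of W
     ev (tr h) = \<Sum>\<^sub>i c\<^sub>i ev (y\<^sub>i' \<circ> h \<circ> x\<^sub>i),
   where y\<^sub>i' : W \<rightarrow> \<emptyset> is the mate of y\<^sub>i : \<emptyset> \<rightarrow> W\<^sup>r. So the trace pairing defining I\<^sub>1 is determined
   by the matrix coefficients defining I\<^sub>2, whence I\<^sub>2 \<subseteq> I\<^sub>1; conversely tr (u \<circ> v) = v \<circ> u for
   u : \<emptyset> \<rightarrow> W, v : W \<rightarrow> \<emptyset> gives I\<^sub>1 \<subseteq> I\<^sub>2. The same expansion for h = g \<circ> S shows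
   S = \<Sum>\<^sub>i c\<^sub>i (S \<circ> x\<^sub>i) \<circ> y\<^sub>i' modulo I\<^sub>1, which is (M').
   For monoidality it suffices to test S \<otimes> T against morphisms \<emptyset> \<rightarrow> V \<otimes> W; modulo I\<^sub>1 these are
   sums of pure tensors x \<otimes> y, and (S \<otimes> T) \<circ> (x \<otimes> y) = (id \<otimes> T \<circ> y) \<circ> S \<circ> x factors through S. *)

context lin_sym_mon_cat_duals
begin

abbreviation hom :: "'o \<Rightarrow> 'o \<Rightarrow> 'm set" where "hom \<equiv> c_hom C"
abbreviation comp_m :: "'m \<Rightarrow> 'm \<Rightarrow> 'm" (infixr "\<cdot>" 55) where "g \<cdot> f \<equiv> c_comp C g f"
abbreviation mtens :: "'m \<Rightarrow> 'm \<Rightarrow> 'm" (infix "\<otimes>" 70) where "f \<otimes> g \<equiv> c_mtens C f g"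
abbreviation otens :: "'o \<Rightarrow> 'o \<Rightarrow> 'o" (infixr "\<otimes>\<^sub>o" 70) where "A \<otimes>\<^sub>o B \<equiv> c_otens C A B"
abbreviation unit_o :: "'o" ("\<emptyset>") where "\<emptyset> \<equiv> c_unit C"
abbreviation idm :: "'o \<Rightarrow> 'm" where "idm \<equiv> c_id C"

declare otens_unit_left [simp] otens_unit_right [simp]

lemma mtens_eq_comp_left:
  assumes "f \<in> hom A B" "g \<in> hom A' B'"
  shows "f \<otimes> g = (f \<otimes> idm B') \<cdot> (idm A \<otimes> g)"
  using interchange[OF id_closed assms(1) assms(2) id_closed] assms id_left id_right by metis

lemma mtens_eq_comp_right:
  assumes "f \<in> hom A B" "g \<in> hom A' B'"
  shows "f \<otimes> g = (idm B \<otimes> g) \<cdot> (f \<otimes> idm A')"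
  using interchange[OF assms(1) id_closed id_closed assms(2)] assms id_left id_right by metis

lemma comp_mtens_id:
  assumes "f \<in> hom A B" "g \<in> hom B D"
  shows "(g \<cdot> f) \<otimes> idm X = (g \<otimes> idm X) \<cdot> (f \<otimes> idm X)"
  using interchange[OF assms id_closed id_closed] id_left[OF id_closed] by metis

lemma mtens_exchange_to_unit:
  assumes f: "f \<in> hom A \<emptyset>" and g: "g \<in> hom B \<emptyset>"
  shows "f \<cdot> (idm A \<otimes> g) = g \<cdot> (f \<otimes> idm B)"
  using mtens_eq_comp_left[OF f g] mtens_eq_comp_right[OF f g] mtens_unit_left[OF g]
    mtens_unit_right[OF f] by simp

lemma mtens_exchange_from_unit:
  assumes f: "f \<in> hom \<emptyset> A" and g: "g \<in> hom \<emptyset> B"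
  shows "(f \<otimes> idm B) \<cdot> g = (idm A \<otimes> g) \<cdot> f"
  using mtens_eq_comp_left[OF f g] mtens_eq_comp_right[OF f g] mtens_unit_left[OF g]
    mtens_unit_right[OF f] by simp

lemma mtens_eq_comp_middle:
  assumes f: "f \<in> hom A B" and g: "g \<in> hom A'' B''"
  shows "f \<otimes> (idm A' \<otimes> g) = (f \<otimes> idm (A' \<otimes>\<^sub>o B'')) \<cdot> (idm (A \<otimes>\<^sub>o A') \<otimes> g)"
proof -
  have "idm A \<otimes> (idm A' \<otimes> g) = idm (A \<otimes>\<^sub>o A') \<otimes> g"
    using mtens_assoc[OF id_closed id_closed g] mtens_id by simp
  moreover have "idm A' \<otimes> g \<in> hom (A' \<otimes>\<^sub>o A'') (A' \<otimes>\<^sub>o B'')"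
    using mtens_closed[OF id_closed g] .
  ultimately show ?thesis using mtens_eq_comp_left[OF f] by metis
qed

lemma braid_unit_left: "c_braid C \<emptyset> A = idm A"
proof -
  let ?b = "c_braid C \<emptyset> A" and ?b' = "c_braid C A \<emptyset>"
  have b: "?b \<in> hom A A" and b': "?b' \<in> hom A A"
    using braid_closed[of \<emptyset> A] braid_closed[of A \<emptyset>] by simp_all
  have idem: "?b \<cdot> ?b = ?b"
    using braid_hexagon2[of \<emptyset> \<emptyset> A] mtens_unit_left[OF b] mtens_unit_right[OF b] by simp
  have inv: "?b \<cdot> ?b' = idm A" using braid_sym[of \<emptyset> A] by simp
  have "?b = ?b \<cdot> (?b \<cdot> ?b')" using inv id_right[OF b] by simp
  also have "\<dots> = idm A" using comp_assoc[OF b' b b] idem inv by simp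
  finally show ?thesis .
qed

lemma evl_comp_coev_unit: "c_evl C \<emptyset> \<cdot> c_coev C \<emptyset> = idm \<emptyset>"
proof -
  have "c_evl C \<emptyset> \<in> hom (c_dual C \<emptyset>) \<emptyset>" "c_coev C \<emptyset> \<in> hom \<emptyset> (c_dual C \<emptyset>)"
    using evl_closed[of \<emptyset>] coev_closed[of \<emptyset>] by simp_all
  then show ?thesis using zigzag1[of \<emptyset>] mtens_unit_left mtens_unit_right by simp
qed

lemma ctrace_unit:
  assumes q: "q \<in> hom \<emptyset> \<emptyset>"
  shows "ctrace C \<emptyset> q = q"
proof -
  let ?D = "c_dual C \<emptyset>" and ?e = "c_evl C \<emptyset>" and ?c = "c_coev C \<emptyset>"
  have e: "?e \<in> hom ?D \<emptyset>" and c: "?c \<in> hom \<emptyset> ?D"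
    using evl_closed[of \<emptyset>] coev_closed[of \<emptyset>] by simp_all
  have qD: "q \<otimes> idm ?D \<in> hom ?D ?D" using mtens_closed[OF q id_closed[of ?D]] by simp
  have "ctrace C \<emptyset> q = ?e \<cdot> (q \<otimes> idm ?D) \<cdot> ?c"
    unfolding ctrace_def braid_unit_left using id_left[OF comp_closed[OF c qD]] by simp
  also have "\<dots> = (?e \<cdot> (q \<otimes> idm ?D)) \<cdot> ?c" using comp_assoc[OF c qD e] .
  also have "\<dots> = (q \<cdot> ?e) \<cdot> ?c" using mtens_exchange_to_unit[OF q e] mtens_unit_left[OF e] by simp
  also have "\<dots> = q" using comp_assoc[OF c e q] evl_comp_coev_unit id_right[OF q] by simp
  finally show ?thesis .
qed

lemma ctrace_rank_one:
  assumes u: "u \<in> hom \<emptyset> W" and v: "v \<in> hom W \<emptyset>"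
  shows "ctrace C W (u \<cdot> v) = v \<cdot> u"
proof -
  let ?D = "c_dual C W" and ?e = "c_evl C W" and ?c = "c_coev C W"
  have e: "?e \<in> hom (?D \<otimes>\<^sub>o W) \<emptyset>" and c: "?c \<in> hom \<emptyset> (W \<otimes>\<^sub>o ?D)"
    by (rule evl_closed coev_closed)+
  have uD: "u \<otimes> idm ?D \<in> hom ?D (W \<otimes>\<^sub>o ?D)" and vD: "v \<otimes> idm ?D \<in> hom (W \<otimes>\<^sub>o ?D) ?D"
    using mtens_closed[OF u id_closed[of ?D]] mtens_closed[OF v id_closed[of ?D]] by simp_all
  have Du: "idm ?D \<otimes> u \<in> hom ?D (?D \<otimes>\<^sub>o W)"
    using mtens_closed[OF id_closed[of ?D] u] by simp
  have DWu: "idm (W \<otimes>\<^sub>o ?D) \<otimes> u \<in> hom (W \<otimes>\<^sub>o ?D) (W \<otimes>\<^sub>o ?D \<otimes>\<^sub>o W)"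
    using mtens_closed[OF id_closed[of "W \<otimes>\<^sub>o ?D"] u] by (simp add: otens_assoc)
  have vDW: "v \<otimes> idm (?D \<otimes>\<^sub>o W) \<in> hom (W \<otimes>\<^sub>o ?D \<otimes>\<^sub>o W) (?D \<otimes>\<^sub>o W)"
    using mtens_closed[OF v id_closed] by simp
  have cW: "?c \<otimes> idm W \<in> hom W (W \<otimes>\<^sub>o ?D \<otimes>\<^sub>o W)"
    using mtens_closed[OF c id_closed[of W]] by (simp add: otens_assoc)
  have We: "idm W \<otimes> ?e \<in> hom (W \<otimes>\<^sub>o ?D \<otimes>\<^sub>o W) W"
    using mtens_closed[OF id_closed[of W] e] by simp
  have braid_u: "c_braid C W ?D \<cdot> (u \<otimes> idm ?D) = idm ?D \<otimes> u"
    using braid_natural[OF u id_closed[of ?D]] braid_unit_left id_right[OF Du] by simp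
  have "ctrace C W (u \<cdot> v) = ?e \<cdot> (c_braid C W ?D \<cdot> (u \<otimes> idm ?D)) \<cdot> (v \<otimes> idm ?D) \<cdot> ?c"
    unfolding ctrace_def comp_mtens_id[OF v u]
    using comp_assoc[OF c vD uD] comp_assoc[OF comp_closed[OF c vD] uD braid_closed] by simp
  also have "\<dots> = ?e \<cdot> (v \<otimes> (idm ?D \<otimes> u)) \<cdot> ?c"
    using braid_u mtens_eq_comp_right[OF v Du] mtens_unit_left[OF Du] comp_assoc[OF c vD Du]
    by simp
  also have "\<dots> = (?e \<cdot> (v \<otimes> idm (?D \<otimes>\<^sub>o W))) \<cdot> (idm (W \<otimes>\<^sub>o ?D) \<otimes> u) \<cdot> ?c"
    using mtens_eq_comp_middle[OF v u] comp_assoc[OF c DWu vDW]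
      comp_assoc[OF comp_closed[OF c DWu] vDW e] by simp
  also have "\<dots> = (v \<cdot> (idm W \<otimes> ?e)) \<cdot> (?c \<otimes> idm W) \<cdot> u"
    using mtens_exchange_to_unit[OF v e] mtens_exchange_from_unit[OF c u] by simp
  also have "\<dots> = v \<cdot> ((idm W \<otimes> ?e) \<cdot> (?c \<otimes> idm W)) \<cdot> u"
    using comp_assoc[OF u cW We] comp_assoc[OF comp_closed[OF u cW] We v] by simp
  also have "\<dots> = v \<cdot> u" using zigzag1[of W] id_left[OF u] by simp
  finally show ?thesis .
qed

definition hom_linear :: "'o \<Rightarrow> 'o \<Rightarrow> ('m \<Rightarrow> 'k) \<Rightarrow> bool" where
  "hom_linear A B \<phi> \<longleftrightarrow>
     (\<forall>f \<in> hom A B. \<forall>g \<in> hom A B. \<phi> (c_add C f g) = \<phi> f + \<phi> g) \<and>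
     (\<forall>f \<in> hom A B. \<forall>c. \<phi> (c_smul C c f) = c * \<phi> f)"

lemma ev_linear_iff_hom_linear: "ev_linear C ev \<longleftrightarrow> hom_linear \<emptyset> \<emptyset> ev"
  by (simp add: ev_linear_def hom_linear_def)

lemma hom_linear_add:
  "hom_linear A B \<phi> \<Longrightarrow> f \<in> hom A B \<Longrightarrow> g \<in> hom A B \<Longrightarrow> \<phi> (c_add C f g) = \<phi> f + \<phi> g"
  by (simp add: hom_linear_def)

lemma hom_linear_smul: "hom_linear A B \<phi> \<Longrightarrow> f \<in> hom A B \<Longrightarrow> \<phi> (c_smul C c f) = c * \<phi> f"
  by (simp add: hom_linear_def)

lemma hom_linear_zero:
  assumes "hom_linear A B \<phi>"
  shows "\<phi> (c_zero C A B) = 0"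
  using hom_linear_add[OF assms zero_closed zero_closed] add_zero[OF zero_closed] by simp

lemma mdiff_closed: "f \<in> hom A B \<Longrightarrow> g \<in> hom A B \<Longrightarrow> mdiff C f g \<in> hom A B"
  by (simp add: mdiff_def add_closed smul_closed)

lemma hom_linear_mdiff:
  assumes "hom_linear A B \<phi>" "f \<in> hom A B" "g \<in> hom A B"
  shows "\<phi> (mdiff C f g) = \<phi> f - \<phi> g"
  using assms by (simp add: mdiff_def hom_linear_add hom_linear_smul smul_closed)

lemma msum_closed: "set fs \<subseteq> hom A B \<Longrightarrow> msum C A B fs \<in> hom A B"
  by (induction fs) (auto simp: msum_def zero_closed add_closed)

lemma hom_linear_msum:
  assumes "hom_linear A B \<phi>"
  shows "set fs \<subseteq> hom A B \<Longrightarrow> \<phi> (msum C A B fs) = (\<Sum>f\<leftarrow>fs. \<phi> f)"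
proof (induction fs)
  case Nil
  show ?case using hom_linear_zero[OF assms] by (simp add: msum_def)
next
  case (Cons f fs)
  then show ?case
    using hom_linear_add[OF assms _ msum_closed] by (simp add: msum_def)
qed

lemma hom_linear_comp_left:
  assumes "hom_linear A D \<phi>" "g \<in> hom B D"
  shows "hom_linear A B (\<lambda>f. \<phi> (g \<cdot> f))"
  using assms unfolding hom_linear_def
  by (simp add: comp_add_right comp_smul_right add_closed smul_closed comp_closed)

lemma hom_linear_comp_right:
  assumes "hom_linear A D \<phi>" "g \<in> hom A B"
  shows "hom_linear B D (\<lambda>f. \<phi> (f \<cdot> g))"
  using assms unfolding hom_linear_def
  by (simp add: comp_add_left comp_smul_left add_closed smul_closed comp_closed)

lemma hom_linear_mtens_id:
  assumes "hom_linear (A \<otimes>\<^sub>o X) (B \<otimes>\<^sub>o X) \<phi>"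
  shows "hom_linear A B (\<lambda>f. \<phi> (f \<otimes> idm X))"
  using assms unfolding hom_linear_def
  by (simp add: mtens_add_left[OF _ _ id_closed] mtens_smul_left[OF _ id_closed]
      mtens_closed[OF _ id_closed])

lemma hom_linear_ctrace:
  assumes "hom_linear \<emptyset> \<emptyset> \<phi>"
  shows "hom_linear W W (\<lambda>f. \<phi> (ctrace C W f))"
  unfolding ctrace_def
  by (intro hom_linear_mtens_id hom_linear_comp_right[OF _ coev_closed]
      hom_linear_comp_left[OF _ braid_closed] hom_linear_comp_left[OF assms evl_closed])

lemma I1_subset_I2: "I1 C ev W W' \<subseteq> I2 C ev W W'"
proof
  fix S assume S: "S \<in> I1 C ev W W'"
  then have Sh: "S \<in> hom W W'" by (simp add: I1_def)
  have "ev (S'' \<cdot> S \<cdot> S') = 0" if S': "S' \<in> hom \<emptyset> W" and S'': "S'' \<in> hom W' \<emptyset>" for S' S''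
  proof -
    have "S'' \<cdot> S \<cdot> S' = ctrace C W (S' \<cdot> S'' \<cdot> S)"
      using ctrace_rank_one[OF S' comp_closed[OF Sh S'']] comp_assoc[OF S' Sh S''] by simp
    also have "\<dots> = ctrace C W ((S' \<cdot> S'') \<cdot> S)" using comp_assoc[OF Sh S'' S'] by simp
    finally show ?thesis using S comp_closed[OF S'' S'] by (simp add: I1_def)
  qed
  then show "S \<in> I2 C ev W W'" using Sh by (simp add: I2_def)
qed

definition mate :: "'o \<Rightarrow> 'm \<Rightarrow> 'm" where
  "mate W y = c_evl C W \<cdot> (y \<otimes> idm W)"

lemma mate_closed:
  assumes "y \<in> hom \<emptyset> (c_dual C W)"
  shows "mate W y \<in> hom W \<emptyset>"
  using comp_closed[OF mtens_closed[OF assms id_closed[of W]] evl_closed] by (simp add: mate_def)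

lemma evl_braid_on_mtens:
  assumes h: "h \<in> hom W W" and x: "x \<in> hom \<emptyset> W" and y: "y \<in> hom \<emptyset> (c_dual C W)"
  shows "(c_evl C W \<cdot> c_braid C W (c_dual C W) \<cdot> (h \<otimes> idm (c_dual C W))) \<cdot> (x \<otimes> y)
       = mate W y \<cdot> h \<cdot> x"
proof -
  let ?D = "c_dual C W" and ?e = "c_evl C W" and ?b = "c_braid C W (c_dual C W)"
  have hD: "h \<otimes> idm ?D \<in> hom (W \<otimes>\<^sub>o ?D) (W \<otimes>\<^sub>o ?D)" using mtens_closed[OF h id_closed] .
  have xy: "x \<otimes> y \<in> hom \<emptyset> (W \<otimes>\<^sub>o ?D)" using mtens_closed[OF x y] by simp
  have hx: "h \<cdot> x \<in> hom \<emptyset> W" using comp_closed[OF x h] .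
  have yW: "y \<otimes> idm W \<in> hom W (?D \<otimes>\<^sub>o W)" using mtens_closed[OF y id_closed[of W]] by simp
  have yhx: "y \<otimes> (h \<cdot> x) \<in> hom \<emptyset> (?D \<otimes>\<^sub>o W)" using mtens_closed[OF y hx] by simp
  have "(?e \<cdot> ?b \<cdot> (h \<otimes> idm ?D)) \<cdot> (x \<otimes> y) = ?e \<cdot> ?b \<cdot> (h \<otimes> idm ?D) \<cdot> (x \<otimes> y)"
    using comp_assoc[OF xy comp_closed[OF hD braid_closed] evl_closed]
      comp_assoc[OF xy hD braid_closed] by simp
  also have "\<dots> = ?e \<cdot> ?b \<cdot> ((h \<cdot> x) \<otimes> y)"
    using interchange[OF x h y id_closed] id_left[OF y] by simp
  also have "\<dots> = ?e \<cdot> (y \<otimes> (h \<cdot> x))"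
    using braid_natural[OF hx y] braid_unit_left id_right[OF yhx] by simp
  also have "\<dots> = ?e \<cdot> (y \<otimes> idm W) \<cdot> h \<cdot> x"
    using mtens_eq_comp_left[OF y hx] mtens_unit_left[OF hx] by simp
  also have "\<dots> = mate W y \<cdot> h \<cdot> x"
    unfolding mate_def using comp_assoc[OF hx yW evl_closed] .
  finally show ?thesis .
qed

abbreviation tens_terms :: "'o \<Rightarrow> 'o \<Rightarrow> ('k \<times> 'm \<times> 'm) set" where
  "tens_terms X Y \<equiv> {(c, x, y). x \<in> hom \<emptyset> X \<and> y \<in> hom \<emptyset> Y}"

definition tens_sum :: "'o \<Rightarrow> 'o \<Rightarrow> ('k \<times> 'm \<times> 'm) list \<Rightarrow> 'm" where
  "tens_sum X Y l = msum C \<emptyset> (X \<otimes>\<^sub>o Y) (map (\<lambda>(c, x, y). c_smul C c (x \<otimes> y)) l)"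

lemma tens_term_closed:
  "p \<in> tens_terms X Y \<Longrightarrow> (\<lambda>(c, x, y). c_smul C c (x \<otimes> y)) p \<in> hom \<emptyset> (X \<otimes>\<^sub>o Y)"
  using mtens_closed[of _ \<emptyset> X _ \<emptyset> Y] by (auto intro: smul_closed)

lemma tens_sum_closed: "set l \<subseteq> tens_terms X Y \<Longrightarrow> tens_sum X Y l \<in> hom \<emptyset> (X \<otimes>\<^sub>o Y)"
  unfolding tens_sum_def using tens_term_closed by (intro msum_closed) auto

end

locale linear_evaluation = lin_sym_mon_cat_duals C for C :: "('o, 'm, 'k::comm_ring_1) lsmcat" +
  fixes ev :: "'m \<Rightarrow> 'k"
  assumes ev_linear: "ev_linear C ev"
begin

lemma hom_linear_ev_ctrace_comp:
  "g \<in> hom W' W \<Longrightarrow> hom_linear W W' (\<lambda>f. ev (ctrace C W (g \<cdot> f)))"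
  using hom_linear_comp_left hom_linear_ctrace ev_linear ev_linear_iff_hom_linear by blast

lemma mdiff_in_I1_iff:
  assumes "S \<in> hom W W'" "T \<in> hom W W'"
  shows "mdiff C S T \<in> I1 C ev W W' \<longleftrightarrow>
         (\<forall>g \<in> hom W' W. ev (ctrace C W (g \<cdot> S)) = ev (ctrace C W (g \<cdot> T)))"
  using assms by (simp add: I1_def mdiff_closed hom_linear_mdiff[OF hom_linear_ev_ctrace_comp])

lemma ev_ctrace_comp_smul_rank_one:
  assumes g: "g \<in> hom W' W" and a: "a \<in> hom \<emptyset> W'" and b: "b \<in> hom W \<emptyset>"
  shows "ev (ctrace C W (g \<cdot> c_smul C c (a \<cdot> b))) = c * ev (b \<cdot> g \<cdot> a)"
  using hom_linear_smul[OF hom_linear_ev_ctrace_comp[OF g] comp_closed[OF b a]]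
    comp_assoc[OF b a g] ctrace_rank_one[OF comp_closed[OF a g] b] by simp

lemma ev_comp_tens_sum:
  assumes l: "set l \<subseteq> tens_terms X Y" and z: "z \<in> hom \<emptyset> (X \<otimes>\<^sub>o Y)"
    and zl: "mdiff C z (tens_sum X Y l) \<in> I1 C ev \<emptyset> (X \<otimes>\<^sub>o Y)"
    and R: "R \<in> hom (X \<otimes>\<^sub>o Y) \<emptyset>"
  shows "ev (R \<cdot> z) = (\<Sum>(c, x, y)\<leftarrow>l. c * ev (R \<cdot> (x \<otimes> y)))"
proof -
  have lin: "hom_linear \<emptyset> (X \<otimes>\<^sub>o Y) (\<lambda>f. ev (R \<cdot> f))"
    using hom_linear_comp_left[OF _ R] ev_linear ev_linear_iff_hom_linear by blast
  have "ev (ctrace C \<emptyset> (R \<cdot> z)) = ev (ctrace C \<emptyset> (R \<cdot> tens_sum X Y l))"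
    using zl mdiff_in_I1_iff[OF z tens_sum_closed[OF l]] R by blast
  then have "ev (R \<cdot> z) = ev (R \<cdot> tens_sum X Y l)"
    using ctrace_unit[OF comp_closed[OF z R]] ctrace_unit[OF comp_closed[OF tens_sum_closed[OF l] R]]
    by simp
  also have "\<dots> = (\<Sum>p\<leftarrow>l. ev (R \<cdot> (\<lambda>(c, x, y). c_smul C c (x \<otimes> y)) p))"
    unfolding tens_sum_def using l tens_term_closed
    by (subst hom_linear_msum[OF lin]) (auto simp: comp_def)
  also have "\<dots> = (\<Sum>(c, x, y)\<leftarrow>l. c * ev (R \<cdot> (x \<otimes> y)))"
  proof (intro arg_cong[where f = sum_list] map_cong refl)
    fix p assume "p \<in> set l"
    with l obtain c x y where p: "p = (c, x, y)" and "x \<in> hom \<emptyset> X" "y \<in> hom \<emptyset> Y" by auto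
    then have "x \<otimes> y \<in> hom \<emptyset> (X \<otimes>\<^sub>o Y)" using mtens_closed[of x \<emptyset> X y \<emptyset> Y] by simp
    then show "ev (R \<cdot> (\<lambda>(c, x, y). c_smul C c (x \<otimes> y)) p) = (\<lambda>(c, x, y). c * ev (R \<cdot> (x \<otimes> y))) p"
      using p hom_linear_smul[OF lin] by simp
  qed
  finally show ?thesis .
qed

lemma ev_ctrace_expansion:
  assumes l: "set l \<subseteq> tens_terms W (c_dual C W)"
    and coev_l: "mdiff C (c_coev C W) (tens_sum W (c_dual C W) l) \<in> I1 C ev \<emptyset> (W \<otimes>\<^sub>o c_dual C W)"
    and h: "h \<in> hom W W"
  shows "ev (ctrace C W h) = (\<Sum>(c, x, y)\<leftarrow>l. c * ev (mate W y \<cdot> h \<cdot> x))"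
proof -
  let ?D = "c_dual C W"
  let ?R = "c_evl C W \<cdot> c_braid C W ?D \<cdot> (h \<otimes> idm ?D)"
  have hD: "h \<otimes> idm ?D \<in> hom (W \<otimes>\<^sub>o ?D) (W \<otimes>\<^sub>o ?D)" using mtens_closed[OF h id_closed] .
  have R: "?R \<in> hom (W \<otimes>\<^sub>o ?D) \<emptyset>"
    using comp_closed[OF comp_closed[OF hD braid_closed] evl_closed] .
  have "ctrace C W h = ?R \<cdot> c_coev C W"
    unfolding ctrace_def using comp_assoc[OF coev_closed hD braid_closed]
      comp_assoc[OF coev_closed comp_closed[OF hD braid_closed] evl_closed] by simp
  then have "ev (ctrace C W h) = (\<Sum>(c, x, y)\<leftarrow>l. c * ev (?R \<cdot> (x \<otimes> y)))"
    using ev_comp_tens_sum[OF l coev_closed coev_l R] by simp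
  also have "\<dots> = (\<Sum>(c, x, y)\<leftarrow>l. c * ev (mate W y \<cdot> h \<cdot> x))"
    using l evl_braid_on_mtens[OF h]
    by (intro arg_cong[where f = sum_list] map_cong) auto
  finally show ?thesis .
qed

end

text \<open>The surjectivity half of property (M).\<close>

locale tensor_generated_evaluation = linear_evaluation +
  assumes tensor_decomposition: "z \<in> hom \<emptyset> (X \<otimes>\<^sub>o Y) \<Longrightarrow>
    \<exists>l. set l \<subseteq> tens_terms X Y \<and> mdiff C z (tens_sum X Y l) \<in> I1 C ev \<emptyset> (X \<otimes>\<^sub>o Y)"

lemma (in linear_evaluation) U_strong_imp_tensor_generated:
  assumes "U_strong C ev"
  shows "tensor_generated_evaluation C ev"
  by unfold_locales (use assms in \<open>auto simp: U_strong_def tens_sum_def\<close>)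

context tensor_generated_evaluation
begin

lemma I2_subset_I1: "I2 C ev W W' \<subseteq> I1 C ev W W'"
proof
  fix S assume S: "S \<in> I2 C ev W W'"
  then have Sh: "S \<in> hom W W'" by (simp add: I2_def)
  obtain l where l: "set l \<subseteq> tens_terms W (c_dual C W)"
    and coev_l: "mdiff C (c_coev C W) (tens_sum W (c_dual C W) l) \<in> I1 C ev \<emptyset> (W \<otimes>\<^sub>o c_dual C W)"
    using tensor_decomposition[OF coev_closed] by blast
  have "ev (ctrace C W (g \<cdot> S)) = 0" if g: "g \<in> hom W' W" for g
  proof -
    have "ev (ctrace C W (g \<cdot> S)) = (\<Sum>(c, x, y)\<leftarrow>l. c * ev (mate W y \<cdot> (g \<cdot> S) \<cdot> x))"
      using ev_ctrace_expansion[OF l coev_l comp_closed[OF Sh g]] .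
    also have "\<dots> = (\<Sum>_\<leftarrow>l. 0)"
    proof (intro arg_cong[where f = sum_list] map_cong refl)
      fix p assume "p \<in> set l"
      with l obtain c x y where p: "p = (c, x, y)" and x: "x \<in> hom \<emptyset> W"
        and y: "y \<in> hom \<emptyset> (c_dual C W)" by auto
      have "mate W y \<cdot> (g \<cdot> S) \<cdot> x = (mate W y \<cdot> g) \<cdot> S \<cdot> x"
        using comp_assoc[OF x Sh g] comp_assoc[OF comp_closed[OF x Sh] g mate_closed[OF y]] by simp
      moreover have "ev ((mate W y \<cdot> g) \<cdot> S \<cdot> x) = 0"
        using S x comp_closed[OF g mate_closed[OF y]] by (simp add: I2_def)
      ultimately show "(\<lambda>(c, x, y). c * ev (mate W y \<cdot> (g \<cdot> S) \<cdot> x)) p = 0" using p by simp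
    qed
    finally show ?thesis by simp
  qed
  then show "S \<in> I1 C ev W W'" using Sh by (simp add: I1_def)
qed

lemma rank_one_decomposition:
  assumes S: "S \<in> hom W W'"
  shows "\<exists>l. set l \<subseteq> {(c, a, b). a \<in> hom \<emptyset> W' \<and> b \<in> hom W \<emptyset>} \<and>
           mdiff C S (msum C W W' (map (\<lambda>(c, a, b). c_smul C c (a \<cdot> b)) l)) \<in> I1 C ev W W'"
proof -
  obtain l0 where l0: "set l0 \<subseteq> tens_terms W (c_dual C W)"
    and coev_l0: "mdiff C (c_coev C W) (tens_sum W (c_dual C W) l0) \<in> I1 C ev \<emptyset> (W \<otimes>\<^sub>o c_dual C W)"
    using tensor_decomposition[OF coev_closed] by blast
  define l where "l = map (\<lambda>(c, x, y). (c, S \<cdot> x, mate W y)) l0"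
  let ?G = "\<lambda>(c, a, b). c_smul C c (a \<cdot> b)"
  have l: "set l \<subseteq> {(c, a, b). a \<in> hom \<emptyset> W' \<and> b \<in> hom W \<emptyset>}"
    using l0 comp_closed[OF _ S] mate_closed by (auto simp: l_def)
  then have Gl: "set (map ?G l) \<subseteq> hom W W'" by (auto intro: smul_closed comp_closed)
  have "ev (ctrace C W (g \<cdot> msum C W W' (map ?G l))) = ev (ctrace C W (g \<cdot> S))"
    if g: "g \<in> hom W' W" for g
  proof -
    note lin = hom_linear_ev_ctrace_comp[OF g]
    have "ev (ctrace C W (g \<cdot> msum C W W' (map ?G l))) = (\<Sum>p\<leftarrow>map ?G l. ev (ctrace C W (g \<cdot> p)))"
      using hom_linear_msum[OF lin Gl] by simp
    also have "\<dots> = (\<Sum>(c, x, y)\<leftarrow>l0. c * ev (mate W y \<cdot> (g \<cdot> S) \<cdot> x))"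
    proof -
      have "ev (ctrace C W (g \<cdot> c_smul C c ((S \<cdot> x) \<cdot> mate W y)))
          = c * ev (mate W y \<cdot> (g \<cdot> S) \<cdot> x)" if "(c, x, y) \<in> set l0" for c x y
        using that l0 ev_ctrace_comp_smul_rank_one[OF g comp_closed[OF _ S] mate_closed]
          comp_assoc[OF _ S g] by auto
      then show ?thesis by (auto simp: l_def intro!: arg_cong[where f = sum_list] map_cong)
    qed
    also have "\<dots> = ev (ctrace C W (g \<cdot> S))"
      using ev_ctrace_expansion[OF l0 coev_l0 comp_closed[OF S g]] by simp
    finally show ?thesis .
  qed
  then have "mdiff C S (msum C W W' (map ?G l)) \<in> I1 C ev W W'"
    using mdiff_in_I1_iff[OF S msum_closed[OF Gl]] by simp
  with l show ?thesis by blast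
qed

lemma I2_of_vanishing_on_mtens:
  assumes M: "M \<in> hom (X \<otimes>\<^sub>o Y) P"
    and vanish: "\<And>x y Z. x \<in> hom \<emptyset> X \<Longrightarrow> y \<in> hom \<emptyset> Y \<Longrightarrow> Z \<in> hom P \<emptyset> \<Longrightarrow> ev (Z \<cdot> M \<cdot> (x \<otimes> y)) = 0"
  shows "M \<in> I2 C ev (X \<otimes>\<^sub>o Y) P"
proof -
  have "ev (Z \<cdot> M \<cdot> z) = 0" if z: "z \<in> hom \<emptyset> (X \<otimes>\<^sub>o Y)" and Z: "Z \<in> hom P \<emptyset>" for z Z
  proof -
    obtain l where l: "set l \<subseteq> tens_terms X Y"
      and zl: "mdiff C z (tens_sum X Y l) \<in> I1 C ev \<emptyset> (X \<otimes>\<^sub>o Y)"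
      using tensor_decomposition[OF z] by blast
    have "ev (Z \<cdot> M \<cdot> z) = (\<Sum>(c, x, y)\<leftarrow>l. c * ev ((Z \<cdot> M) \<cdot> (x \<otimes> y)))"
      using ev_comp_tens_sum[OF l z zl comp_closed[OF M Z]] comp_assoc[OF z M Z] by simp
    also have "\<dots> = (\<Sum>_\<leftarrow>l. 0)"
    proof (intro arg_cong[where f = sum_list] map_cong refl)
      fix p assume "p \<in> set l"
      with l obtain c x y where p: "p = (c, x, y)" and x: "x \<in> hom \<emptyset> X" and y: "y \<in> hom \<emptyset> Y"
        by auto
      have "(Z \<cdot> M) \<cdot> (x \<otimes> y) = Z \<cdot> M \<cdot> (x \<otimes> y)"
        using comp_assoc[OF mtens_closed[OF x y] M Z] by simp
      then show "(\<lambda>(c, x, y). c * ev ((Z \<cdot> M) \<cdot> (x \<otimes> y))) p = 0" using p vanish[OF x y Z] by simp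
    qed
    finally show ?thesis by simp
  qed
  then show ?thesis using M by (simp add: I2_def)
qed

lemma mtens_I1_left:
  assumes S: "S \<in> I1 C ev V V'" and T: "T \<in> hom W W'"
  shows "S \<otimes> T \<in> I1 C ev (V \<otimes>\<^sub>o W) (V' \<otimes>\<^sub>o W')"
proof -
  have S2: "S \<in> I2 C ev V V'" and Sh: "S \<in> hom V V'"
    using S I1_subset_I2 by (auto simp: I1_def)
  have "S \<otimes> T \<in> I2 C ev (V \<otimes>\<^sub>o W) (V' \<otimes>\<^sub>o W')"
  proof (rule I2_of_vanishing_on_mtens[OF mtens_closed[OF Sh T]])
    fix x y Z assume x: "x \<in> hom \<emptyset> V" and y: "y \<in> hom \<emptyset> W" and Z: "Z \<in> hom (V' \<otimes>\<^sub>o W') \<emptyset>"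
    have Sx: "S \<cdot> x \<in> hom \<emptyset> V'" and Ty: "T \<cdot> y \<in> hom \<emptyset> W'"
      using comp_closed[OF x Sh] comp_closed[OF y T] .
    have Ty': "idm V' \<otimes> (T \<cdot> y) \<in> hom V' (V' \<otimes>\<^sub>o W')" using mtens_closed[OF id_closed Ty] by simp
    have "(S \<otimes> T) \<cdot> (x \<otimes> y) = (idm V' \<otimes> (T \<cdot> y)) \<cdot> S \<cdot> x"
      using interchange[OF x Sh y T] mtens_eq_comp_right[OF Sx Ty] mtens_unit_right[OF Sx] by simp
    then have "Z \<cdot> (S \<otimes> T) \<cdot> (x \<otimes> y) = (Z \<cdot> (idm V' \<otimes> (T \<cdot> y))) \<cdot> S \<cdot> x"
      using comp_assoc[OF Sx Ty' Z] by simp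
    then show "ev (Z \<cdot> (S \<otimes> T) \<cdot> (x \<otimes> y)) = 0"
      using S2 x comp_closed[OF Ty' Z] by (simp add: I2_def)
  qed
  then show ?thesis using I2_subset_I1 by blast
qed

lemma mtens_I1_right:
  assumes S: "S \<in> I1 C ev V V'" and T: "T \<in> hom W W'"
  shows "T \<otimes> S \<in> I1 C ev (W \<otimes>\<^sub>o V) (W' \<otimes>\<^sub>o V')"
proof -
  have S2: "S \<in> I2 C ev V V'" and Sh: "S \<in> hom V V'"
    using S I1_subset_I2 by (auto simp: I1_def)
  have "T \<otimes> S \<in> I2 C ev (W \<otimes>\<^sub>o V) (W' \<otimes>\<^sub>o V')"
  proof (rule I2_of_vanishing_on_mtens[OF mtens_closed[OF T Sh]])
    fix x y Z assume x: "x \<in> hom \<emptyset> W" and y: "y \<in> hom \<emptyset> V" and Z: "Z \<in> hom (W' \<otimes>\<^sub>o V') \<emptyset>"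
    have Tx: "T \<cdot> x \<in> hom \<emptyset> W'" and Sy: "S \<cdot> y \<in> hom \<emptyset> V'"
      using comp_closed[OF x T] comp_closed[OF y Sh] .
    have Tx': "(T \<cdot> x) \<otimes> idm V' \<in> hom V' (W' \<otimes>\<^sub>o V')" using mtens_closed[OF Tx id_closed] by simp
    have "(T \<otimes> S) \<cdot> (x \<otimes> y) = ((T \<cdot> x) \<otimes> idm V') \<cdot> S \<cdot> y"
      using interchange[OF x T y Sh] mtens_eq_comp_left[OF Tx Sy] mtens_unit_left[OF Sy] by simp
    then have "Z \<cdot> (T \<otimes> S) \<cdot> (x \<otimes> y) = (Z \<cdot> ((T \<cdot> x) \<otimes> idm V')) \<cdot> S \<cdot> y"
      using comp_assoc[OF Sy Tx' Z] by simp
    then show "ev (Z \<cdot> (T \<otimes> S) \<cdot> (x \<otimes> y)) = 0"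
      using S2 y comp_closed[OF Tx' Z] by (simp add: I2_def)
  qed
  then show ?thesis using I2_subset_I1 by blast
qed

end

theorem mainTheorem5:
  fixes C :: "('o, 'm, 'k::comm_ring_1) lsmcat" and ev :: "'m \<Rightarrow> 'k"
  assumes "lin_sym_mon_cat_duals C"
    and "ev_linear C ev"
    and "ev_multiplicative C ev"
    and "U_strong C ev"
  shows "(\<forall>W W'. \<forall>S \<in> c_hom C W W'. \<exists>l.
            set l \<subseteq> {(c, a, b). a \<in> c_hom C (c_unit C) W' \<and> b \<in> c_hom C W (c_unit C)} \<and>
            mdiff C S (msum C W W' (map (\<lambda>(c, a, b). c_smul C c (c_comp C a b)) l)) \<in> I1 C ev W W')
       \<and> (\<forall>W W'. I1 C ev W W' = I2 C ev W W')
       \<and> (\<forall>V V' W W' S T. S \<in> I1 C ev V V' \<longrightarrow> T \<in> c_hom C W W' \<longrightarrow>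
            c_mtens C S T \<in> I1 C ev (c_otens C V W) (c_otens C V' W') \<and>
            c_mtens C T S \<in> I1 C ev (c_otens C W V) (c_otens C W' V'))"
proof -
  interpret linear_evaluation C ev
    using assms(1,2) by (simp add: linear_evaluation_def linear_evaluation_axioms_def)
  interpret tensor_generated_evaluation C ev
    using U_strong_imp_tensor_generated[OF assms(4)] .
  show ?thesis
    using rank_one_decomposition I1_subset_I2 I2_subset_I1 mtens_I1_left mtens_I1_right
    by (meson subset_antisym)
qed

end
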